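(* Fix $\sigma\in(0,\tfrac12)$. There exist $\lambda^{*}>0$ and $s^{*}\in(0,1)$ such that: (i) for all $\lambda\in(0,\lambda^{*})$, $\mathcal{I}^1_\lambda=(0,1)$; (ii) for $\lambda=\lambda^{*}$, $\mathcal{I}^1_\lambda=(0,1)\setminus\{s^{*}\}$; (iii) for all $\lambda>\lambda^{*}$ there exist $s_0,s_1\in(0,1)$ with $s_0<s^{*}<s_1$ such that $\mathcal{I}^1_\lambda=(0,s_0)\cup(s_1,1)$.
   Context: Let $g(s)=s^2(1-s)$ and $G(u)=u^3/3-u^4/4$ on $[0,1]$. For $\lambda>0$ and $s\in(0,1)$, let $(\hat u_s,\hat v_s)$ be the unique solution, on its maximal interval of existence, of $u'=v$, $v'=-\lambda g(u)$, $u(1)=s$, $v(1)=0$. Let $\hat T_0(s)$ denote the time taken by $(\hat u_s,\hat v_s)$ to go from $(s,0)$ to the half-line $\{0\}\times(0,+\infty)$ moving backwards in time along the level line $v^2+2\lambda G(u)=2\lambda G(s)$. Set $\mathcal{I}^1_\lambda=\{s\in(0,1):\hat T_0(s)>\sigma\}$. *)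

theory Defs
  imports "HOL-Analysis.Analysis"
begin

definition g :: "real \<Rightarrow> real" where
  "g s = s^2 * (1 - s)"

definition G :: "real \<Rightarrow> real" where
  "G u = u^3 / 3 - u^4 / 4"

text \<open>The time taken by the solution of u' = v, v' = -lam g(u), u(1) = s, v(1) = 0,
  moving backwards in time from (s,0), to reach the half-line {0} x (0,+inf):
  the (unique) tau > 0 such that the solution exists on [1-tau,1], lies on
  the half-line at time 1-tau, and does not meet it at times in (1-tau,1].\<close>
definition T0hat :: "real \<Rightarrow> real \<Rightarrow> real" where
  "T0hat lam s = (THE tau. tau > 0 \<and>
     (\<exists>u v :: real \<Rightarrow> real.
        (\<forall>t\<in>{1-tau..1}. (u has_real_derivative v t) (at t within {1-tau..1}) \<and>
                          (v has_real_derivative (- lam * g (u t))) (at t within {1-tau..1})) \<and>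
        u 1 = s \<and> v 1 = 0 \<and>
        u (1 - tau) = 0 \<and> v (1 - tau) > 0 \<and>
        (\<forall>t\<in>{1-tau<..1}. \<not> (u t = 0 \<and> v t > 0))))"

definition I1 :: "real \<Rightarrow> real \<Rightarrow> real set" where
  "I1 sg lam = {s \<in> {0<..<1}. T0hat lam s > sg}"

end

theory Submission
  imports Defs "HOL-Real_Asymp.Real_Asymp"
begin

text \<open>
  On the orbit through (s,0) put u = s (1 - z^2) with z \<in> [0,1]. Then
  G s - G u = s^2 z^2 P(s,z) for a polynomial P that is positive for 0 < s < 1, and
  conservation of v^2 + 2 lam G(u) reduces the orbit to z' = - sqrt (lam P(s,z) / 2).
  Hence \hat T_0(s) = tau(s) / sqrt lam with tau(s) the integral of sqrt (2 / P(s,z)) over z \<in> [0,1]: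
  the solution is built explicitly by inverting this time integral, and it is the one
  in the definition of \hat T_0 by uniqueness for the ODE.

  P is affine in s minus s^2 times a positive function, hence strictly concave in s,
  and p \<mapsto> 1 / sqrt p is convex and decreasing, so tau is strictly convex on (0,1).
  As tau tends to +\<infinity> at both ends, it decreases up to its minimiser s* and increases
  after it, and I^1_lam is the superlevel set {tau > sigma sqrt lam}. This gives
  lam* = (tau(s*) / sigma)^2.
\<close>

subsection \<open>Strictly convex functions on (0,1)\<close>

definition strict_convex_on :: "real set \<Rightarrow> (real \<Rightarrow> real) \<Rightarrow> bool" where
  "strict_convex_on S f \<longleftrightarrow> (\<forall>x\<in>S. \<forall>y\<in>S. \<forall>t. x < y \<and> 0 < t \<and> t < 1 \<longrightarrow>
     f ((1 - t) * x + t * y) < (1 - t) * f x + t * f y)"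

lemma strict_convex_on_imp_convex_on:
  assumes "strict_convex_on S f" "convex S"
  shows "convex_on S f"
  using assms by (intro convex_on_linorderI) (auto simp: strict_convex_on_def intro: less_imp_le)

lemma convex_on_inverse_sqrt: "convex_on {0<..} (\<lambda>p::real. 1 / sqrt p)"
proof -
  have "convex_on {0<..} (\<lambda>p::real. p powr (-1/2))"
    by (rule f''_ge0_imp_convex[where f' = "\<lambda>p. -1/2 * p powr (-3/2)" and f'' = "\<lambda>p. 3/4 * p powr (-5/2)"])
       (auto intro!: derivative_eq_intros simp: powr_diff)
  moreover have "p powr (-1/2) = 1 / sqrt p" if "0 < p" for p :: real
    using that by (simp add: powr_minus_divide powr_half_sqrt)
  moreover have "0 < u * x + v * y" if "0 < x" "0 < y" "0 \<le> u" "0 \<le> v" "u + v = 1" for x y u v :: real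
    using that by (cases "u = 0") (auto intro: add_pos_nonneg)
  ultimately show ?thesis
    unfolding convex_on_def by auto
qed

lemma convex_combination_in_unit_interval:
  fixes x y t :: real
  assumes "0 < x" "x < y" "y < 1" "0 < t" "t < 1"
  shows "0 < (1 - t) * x + t * y" "(1 - t) * x + t * y < 1"
proof -
  have "(1 - t) * x < 1 - t"
    using mult_strict_left_mono[of x 1 "1 - t"] assms by simp
  moreover have "t * y < t"
    using mult_strict_left_mono[of y 1 t] assms by simp
  moreover have "0 < (1 - t) * x" "0 < t * y"
    using assms by simp_all
  ultimately show "0 < (1 - t) * x + t * y" "(1 - t) * x + t * y < 1"
    by linarith+
qed

lemma exceeds_near_ends:
  fixes f :: "real \<Rightarrow> real"
  assumes lim0: "filterlim f at_top (at_right 0)" and lim1: "filterlim f at_top (at_left 1)"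
    and r: "r \<in> {0<..<1}"
  obtains a b where "0 < a" "a < r" "r < b" "b < 1"
    "\<And>x. 0 < x \<Longrightarrow> x \<le> a \<Longrightarrow> c < f x" "\<And>x. b \<le> x \<Longrightarrow> x < 1 \<Longrightarrow> c < f x"
proof -
  obtain a' where "0 < a'" and a': "\<And>x. 0 < x \<Longrightarrow> x < a' \<Longrightarrow> c < f x"
    using lim0 unfolding filterlim_at_top_dense eventually_at_right_field by blast
  obtain b' where "b' < 1" and b': "\<And>x. b' < x \<Longrightarrow> x < 1 \<Longrightarrow> c < f x"
    using lim1 unfolding filterlim_at_top_dense eventually_at_left_field by blast
  show ?thesis
  proof
    show "0 < min a' r / 2" "min a' r / 2 < r" "r < (max b' r + 1) / 2" "(max b' r + 1) / 2 < 1"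
      using \<open>0 < a'\<close> \<open>b' < 1\<close> r by auto
    show "c < f x" if "0 < x" "x \<le> min a' r / 2" for x
      using that \<open>0 < a'\<close> by (intro a') auto
    show "c < f x" if "(max b' r + 1) / 2 \<le> x" "x < 1" for x
      using that by (intro b') auto
  qed
qed

lemma continuous_coercive_attains_min:
  fixes f :: "real \<Rightarrow> real"
  assumes cont: "continuous_on {0<..<1} f"
    and lim0: "filterlim f at_top (at_right 0)" and lim1: "filterlim f at_top (at_left 1)"
  obtains m where "m \<in> {0<..<1}" "\<forall>x\<in>{0<..<1}. f m \<le> f x"
proof -
  obtain a b where ab: "0 < a" "a < 1/2" "1/2 < b" "b < 1"
    and outside: "\<And>x. 0 < x \<Longrightarrow> x \<le> a \<Longrightarrow> f (1/2) < f x" "\<And>x. b \<le> x \<Longrightarrow> x < 1 \<Longrightarrow> f (1/2) < f x"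
    using lim0 lim1 by (rule exceeds_near_ends[where r = "1/2" and c = "f (1/2)"]) auto
  have "{a..b} \<subseteq> {0<..<1}"
    using ab by auto
  then have "\<exists>m\<in>{a..b}. \<forall>y\<in>{a..b}. f m \<le> f y"
    using ab by (intro continuous_attains_inf compact_Icc continuous_on_subset[OF cont]) auto
  then obtain m where m: "m \<in> {a..b}" and min: "\<forall>y\<in>{a..b}. f m \<le> f y"
    by blast
  have "f m \<le> f x" if "x \<in> {0<..<1}" for x
  proof (cases "x \<in> {a..b}")
    case False
    then have "f (1/2) < f x"
      using that outside by force
    moreover have "f m \<le> f (1/2)"
      using min ab by auto
    ultimately show ?thesis
      by simp
  qed (use min in auto)
  with m ab show ?thesis
    by (intro that[of m]) auto
qed

lemma strictly_convex_min_unimodal: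
  fixes f :: "real \<Rightarrow> real"
  assumes strict: "strict_convex_on {0<..<1} f"
    and m: "m \<in> {0<..<1}" and min: "\<forall>x\<in>{0<..<1}. f m \<le> f x"
  shows "\<And>x. x \<in> {0<..<1} \<Longrightarrow> x \<noteq> m \<Longrightarrow> f m < f x"
    and "\<And>x y. 0 < x \<Longrightarrow> x < y \<Longrightarrow> y \<le> m \<Longrightarrow> f y < f x"
    and "\<And>x y. m \<le> x \<Longrightarrow> x < y \<Longrightarrow> y < 1 \<Longrightarrow> f x < f y"
proof -
  have between: "f y < max (f x) (f z)" if "0 < x" "x < y" "y < z" "z < 1" for x y z
  proof -
    define t where "t = (y - x) / (z - x)"
    have "0 < t" "t < 1"
      using that by (auto simp: t_def)
    have "(1 - t) * x + t * z = x + t * (z - x)"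
      by (simp add: algebra_simps)
    also have "\<dots> = y"
      using that by (simp add: t_def)
    finally have "f y < (1 - t) * f x + t * f z"
      using strict that \<open>0 < t\<close> \<open>t < 1\<close> unfolding strict_convex_on_def by auto
    also have "\<dots> \<le> (1 - t) * max (f x) (f z) + t * max (f x) (f z)"
      using \<open>0 < t\<close> \<open>t < 1\<close> by (intro add_mono mult_left_mono) auto
    finally show ?thesis
      by (simp add: algebra_simps)
  qed
  show strict_min: "f m < f x" if "x \<in> {0<..<1}" "x \<noteq> m" for x
  proof -
    have "f m \<le> f ((x + m) / 2)"
      using that m min by auto
    moreover have "f ((x + m) / 2) < max (f x) (f m)"
      using that m between[of x "(x + m) / 2" m] between[of m "(x + m) / 2" x]
      by (cases "x < m") (auto simp: max.commute)
    ultimately show ?thesis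
      by (auto simp: max_def split: if_splits)
  qed
  show "f y < f x" if "0 < x" "x < y" "y \<le> m" for x y
    using that m strict_min[of x] min between[of x y m]
    by (cases "y = m") (auto simp: max_def split: if_splits)
  show "f x < f y" if "m \<le> x" "x < y" "y < 1" for x y
    using that m strict_min[of y] min between[of m x y]
    by (cases "x = m") (auto simp: max_def split: if_splits)
qed

lemma unimodal_superlevel_set:
  fixes f :: "real \<Rightarrow> real"
  assumes cont: "continuous_on {0<..<1} f" and m: "m \<in> {0<..<1}"
    and dec: "\<And>x y. 0 < x \<Longrightarrow> x < y \<Longrightarrow> y \<le> m \<Longrightarrow> f y < f x"
    and inc: "\<And>x y. m \<le> x \<Longrightarrow> x < y \<Longrightarrow> y < 1 \<Longrightarrow> f x < f y"
    and lim0: "filterlim f at_top (at_right 0)" and lim1: "filterlim f at_top (at_left 1)"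
    and c: "f m < c"
  obtains s0 s1 where "0 < s0" "s0 < m" "m < s1" "s1 < 1"
    "{s \<in> {0<..<1}. c < f s} = {0<..<s0} \<union> {s1<..<1}"
proof -
  obtain a b where ab: "0 < a" "a < m" "m < b" "b < 1" and "c < f a" "c < f b"
    using lim0 lim1 m by (rule exceeds_near_ends[where r = m and c = c]) auto
  moreover have "continuous_on {a..m} f" "continuous_on {m..b} f"
    using ab by (auto intro: continuous_on_subset[OF cont])
  ultimately obtain s0 s1 where s0: "a \<le> s0" "s0 \<le> m" "f s0 = c" and s1: "m \<le> s1" "s1 \<le> b" "f s1 = c"
    using IVT2'[of f m c a] IVT'[of f m c b] c by force
  have "s0 < m" "m < s1"
    using s0 s1 c by (auto simp: order.order_iff_strict)
  have "c < f s \<longleftrightarrow> s < s0 \<or> s1 < s" if "s \<in> {0<..<1}" for s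
  proof (cases "s \<le> m")
    case True
    then show ?thesis
      using that dec[of s s0] dec[of s0 s] ab s0 \<open>s0 < m\<close> \<open>m < s1\<close>
      by (cases s s0 rule: linorder_cases) auto
  next
    case False
    then show ?thesis
      using that inc[of s s1] inc[of s1 s] ab s1 \<open>s0 < m\<close> \<open>m < s1\<close>
      by (cases s s1 rule: linorder_cases) auto
  qed
  then have "{s \<in> {0<..<1}. c < f s} = {0<..<s0} \<union> {s1<..<1}"
    using ab s0 s1 \<open>s0 < m\<close> \<open>m < s1\<close> by auto
  with \<open>s0 < m\<close> \<open>m < s1\<close> show ?thesis
    using ab s0(1) s1(2) by (intro that) auto
qed

lemma strict_min_superlevel_sets:
  fixes f :: "real \<Rightarrow> real"
  assumes strict_min: "\<And>x. x \<in> {0<..<1} \<Longrightarrow> x \<noteq> m \<Longrightarrow> f m < f x"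
  shows "c < f m \<Longrightarrow> {s \<in> {0<..<1}. c < f s} = {0<..<1}"
    and "{s \<in> {0<..<1}. f m < f s} = {0<..<1} - {m}"
proof -
  assume "c < f m"
  then have "c < f s" if "s \<in> {0<..<1}" for s
    using strict_min[OF that] by (cases "s = m") auto
  then show "{s \<in> {0<..<1}. c < f s} = {0<..<1}"
    by blast
next
  show "{s \<in> {0<..<1}. f m < f s} = {0<..<1} - {m}"
    using strict_min by blast
qed

lemma strictly_convex_coercive_superlevel_sets:
  fixes f :: "real \<Rightarrow> real"
  assumes strict: "strict_convex_on {0<..<1} f"
    and lim0: "filterlim f at_top (at_right 0)" and lim1: "filterlim f at_top (at_left 1)"
  obtains m where "m \<in> {0<..<1}"
    "\<And>c. c < f m \<Longrightarrow> {s \<in> {0<..<1}. c < f s} = {0<..<1}"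
    "{s \<in> {0<..<1}. f m < f s} = {0<..<1} - {m}"
    "\<And>c. f m < c \<Longrightarrow> \<exists>s0 s1. 0 < s0 \<and> s0 < m \<and> m < s1 \<and> s1 < 1 \<and>
                              {s \<in> {0<..<1}. c < f s} = {0<..<s0} \<union> {s1<..<1}"
proof -
  have cont: "continuous_on {0<..<1} f"
    using strict by (intro convex_on_continuous strict_convex_on_imp_convex_on) auto
  obtain m where m: "m \<in> {0<..<1}" and min: "\<forall>x\<in>{0<..<1}. f m \<le> f x"
    using cont lim0 lim1 by (rule continuous_coercive_attains_min) blast
  note unimodal = strictly_convex_min_unimodal[OF strict m min]
  show ?thesis
  proof (rule that[OF m])
    show "{s \<in> {0<..<1}. c < f s} = {0<..<1}" if "c < f m" for c
      using strict_min_superlevel_sets(1)[where f = f and m = m] unimodal(1) that by blast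
    show "{s \<in> {0<..<1}. f m < f s} = {0<..<1} - {m}"
      using strict_min_superlevel_sets(2)[where f = f and m = m] unimodal(1) by blast
    show "\<exists>s0 s1. 0 < s0 \<and> s0 < m \<and> m < s1 \<and> s1 < 1 \<and>
                 {s \<in> {0<..<1}. c < f s} = {0<..<s0} \<union> {s1<..<1}" if "f m < c" for c
      using unimodal_superlevel_set[OF cont m unimodal(2,3) lim0 lim1 that] by blast
  qed
qed

subsection \<open>Uniqueness for the backward initial value problem\<close>

lemma g_lipschitz_on_bounded:
  assumes "\<bar>x\<bar> \<le> M" "\<bar>y\<bar> \<le> M"
  shows "\<bar>g x - g y\<bar> \<le> (2 * M + 3 * M^2) * \<bar>x - y\<bar>"
proof -
  have factor: "g x - g y = (x - y) * ((x + y) - (x^2 + x * y + y^2))"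
    unfolding g_def by (simp add: power2_eq_square power3_eq_cube algebra_simps)
  have "0 \<le> M"
    using assms by linarith
  then have "\<bar>x * y\<bar> \<le> M^2"
    using assms by (simp add: abs_mult power2_eq_square mult_mono)
  moreover have "\<bar>x^2\<bar> \<le> M^2" "\<bar>y^2\<bar> \<le> M^2"
    using power_mono[OF assms(1) abs_ge_zero, of 2] power_mono[OF assms(2) abs_ge_zero, of 2] by simp_all
  ultimately have "\<bar>(x + y) - (x^2 + x * y + y^2)\<bar> \<le> 2 * M + 3 * M^2"
    using assms by linarith
  then show ?thesis
    unfolding factor abs_mult by (simp add: mult.commute mult_left_mono)
qed

lemma scaled_g_locally_lipschitz:
  "\<exists>L\<ge>0. \<forall>x y. \<bar>x\<bar> \<le> M \<longrightarrow> \<bar>y\<bar> \<le> M \<longrightarrow> \<bar>c * g x - c * g y\<bar> \<le> L * \<bar>x - y\<bar>"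
proof (intro exI conjI allI impI)
  show "0 \<le> \<bar>c\<bar> * (2 * \<bar>M\<bar> + 3 * M^2)"
    by simp
  fix x y
  assume "\<bar>x\<bar> \<le> M" "\<bar>y\<bar> \<le> M"
  then have "\<bar>g x - g y\<bar> \<le> (2 * \<bar>M\<bar> + 3 * \<bar>M\<bar>^2) * \<bar>x - y\<bar>"
    by (intro g_lipschitz_on_bounded) auto
  then have "\<bar>c\<bar> * \<bar>g x - g y\<bar> \<le> \<bar>c\<bar> * ((2 * \<bar>M\<bar> + 3 * M^2) * \<bar>x - y\<bar>)"
    by (simp add: mult_left_mono)
  then show "\<bar>c * g x - c * g y\<bar> \<le> \<bar>c\<bar> * (2 * \<bar>M\<bar> + 3 * M^2) * \<bar>x - y\<bar>"
    by (simp add: right_diff_distrib[symmetric] abs_mult mult.assoc)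
qed

lemma sum_squares_deriv_lower_bound:
  fixes du dv dF L :: real
  assumes "\<bar>dF\<bar> \<le> L * \<bar>du\<bar>" "0 \<le> L"
  shows "- (1 + L) * (du^2 + dv^2) \<le> 2 * du * dv + 2 * dv * dF"
proof -
  have "0 \<le> (\<bar>du\<bar> - \<bar>dv\<bar>)^2"
    by simp
  then have amgm: "2 * \<bar>du\<bar> * \<bar>dv\<bar> \<le> du^2 + dv^2"
    by (simp add: power2_eq_square algebra_simps)
  have "\<bar>2 * dv * dF\<bar> \<le> 2 * \<bar>dv\<bar> * (L * \<bar>du\<bar>)"
    using assms(1) by (simp add: abs_mult mult_left_mono)
  also have "\<dots> = L * (2 * \<bar>du\<bar> * \<bar>dv\<bar>)"
    by (simp add: algebra_simps)
  also have "\<dots> \<le> L * (du^2 + dv^2)"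
    using amgm assms(2) by (rule mult_left_mono)
  finally have "\<bar>2 * dv * dF\<bar> \<le> L * (du^2 + dv^2)" .
  moreover have "\<bar>2 * du * dv\<bar> \<le> du^2 + dv^2"
    using amgm by (simp add: abs_mult)
  ultimately show ?thesis
    by (simp add: algebra_simps abs_le_iff)
qed

lemma weighted_sq_dist_has_nonneg_derivative:
  fixes F u v u' v' :: "real \<Rightarrow> real"
  assumes du: "(u has_real_derivative v x) (at x)" and du': "(u' has_real_derivative v' x) (at x)"
    and dv: "(v has_real_derivative F (u x)) (at x)" and dv': "(v' has_real_derivative F (u' x)) (at x)"
    and lip: "\<bar>F (u x) - F (u' x)\<bar> \<le> L * \<bar>u x - u' x\<bar>" "0 \<le> L"
  shows "\<exists>y. ((\<lambda>t. ((u t - u' t)^2 + (v t - v' t)^2) * exp ((1 + L) * t)) has_real_derivative y) (at x)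
             \<and> 0 \<le> y"
proof -
  define D' where "D' = 2 * (u x - u' x) * (v x - v' x) + 2 * (v x - v' x) * (F (u x) - F (u' x))"
  define D where "D = (u x - u' x)^2 + (v x - v' x)^2"
  have "((\<lambda>t. ((u t - u' t)^2 + (v t - v' t)^2) * exp ((1 + L) * t)) has_real_derivative
          (D' + (1 + L) * D) * exp ((1 + L) * x)) (at x)"
    unfolding D_def D'_def
    by (rule derivative_eq_intros du du' dv dv' refl | simp add: algebra_simps)+
  moreover have "0 \<le> D' + (1 + L) * D"
    using sum_squares_deriv_lower_bound[OF lip, of "v x - v' x"]
    unfolding D'_def D_def by (simp add: algebra_simps)
  ultimately show ?thesis
    by auto
qed

text \<open>A Gronwall-type argument: (u - u')^2 + (v - v')^2 times e^{(1 + L) t} is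
  nondecreasing and vanishes at the final time b.\<close>
lemma second_order_ode_unique_backward:
  fixes F u v u' v' :: "real \<Rightarrow> real"
  assumes lip: "\<And>M. \<exists>L\<ge>0. \<forall>x y. \<bar>x\<bar> \<le> M \<longrightarrow> \<bar>y\<bar> \<le> M \<longrightarrow> \<bar>F x - F y\<bar> \<le> L * \<bar>x - y\<bar>"
    and sol1: "\<forall>t\<in>{a..b}. (u has_real_derivative v t) (at t within {a..b}) \<and>
                           (v has_real_derivative F (u t)) (at t within {a..b})"
    and sol2: "\<forall>t\<in>{a..b}. (u' has_real_derivative v' t) (at t within {a..b}) \<and>
                           (v' has_real_derivative F (u' t)) (at t within {a..b})"
    and final: "u b = u' b" "v b = v' b"
    and t: "t \<in> {a..b}"
  shows "u t = u' t \<and> v t = v' t"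
proof -
  have cont: "continuous_on {a..b} u" "continuous_on {a..b} u'"
             "continuous_on {a..b} v" "continuous_on {a..b} v'"
    using sol1 sol2 by (auto intro!: DERIV_continuous_on)
  have "bounded ((\<lambda>t. \<bar>u t\<bar> + \<bar>u' t\<bar>) ` {a..b})"
    by (intro compact_imp_bounded compact_continuous_image continuous_intros cont compact_Icc)
  then obtain M where bound: "\<forall>r\<in>(\<lambda>t. \<bar>u t\<bar> + \<bar>u' t\<bar>) ` {a..b}. \<bar>r\<bar> \<le> M"
    unfolding bounded_real by blast
  have M: "\<bar>u x\<bar> \<le> M \<and> \<bar>u' x\<bar> \<le> M" if "x \<in> {a..b}" for x
  proof -
    have "\<bar>u x\<bar> + \<bar>u' x\<bar> \<le> M"
      using bound that by fastforce
    then show ?thesis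
      using abs_ge_zero[of "u x"] abs_ge_zero[of "u' x"] by linarith
  qed
  obtain L where "0 \<le> L" and L: "\<forall>x y. \<bar>x\<bar> \<le> M \<longrightarrow> \<bar>y\<bar> \<le> M \<longrightarrow> \<bar>F x - F y\<bar> \<le> L * \<bar>x - y\<bar>"
    using lip by blast
  define W where "W t = ((u t - u' t)^2 + (v t - v' t)^2) * exp ((1 + L) * t)" for t
  have "W t \<le> W b"
  proof (rule DERIV_nonneg_imp_increasing_open[where f = W])
    show "t \<le> b"
      using t by simp
    show "continuous_on {t..b} W"
      unfolding W_def using t
      by (intro continuous_intros continuous_on_subset[OF cont(1)] continuous_on_subset[OF cont(2)]
          continuous_on_subset[OF cont(3)] continuous_on_subset[OF cont(4)]) auto
  next
    fix x
    assume "t < x" "x < b"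
    then have x_ab: "x \<in> {a..b}" and at_x: "at x within {a..b} = at x"
      using t by (auto intro: at_within_Icc_at)
    show "\<exists>y. (W has_real_derivative y) (at x) \<and> 0 \<le> y"
      unfolding W_def[abs_def]
      using sol1[rule_format, OF x_ab] sol2[rule_format, OF x_ab] L M[OF x_ab] \<open>0 \<le> L\<close>
      by (intro weighted_sq_dist_has_nonneg_derivative) (auto simp: at_x)
  qed
  then have "(u t - u' t)^2 + (v t - v' t)^2 \<le> 0"
    using final by (simp add: W_def mult_le_0_iff)
  then show ?thesis
    by (simp add: sum_power2_le_zero_iff)
qed

subsection \<open>The reduced potential drop\<close>

definition avg_pow3 :: "real \<Rightarrow> real" where
  "avg_pow3 x = (1 + x + x^2) / 3"

definition avg_pow4 :: "real \<Rightarrow> real" where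
  "avg_pow4 x = (1 + x + x^2 + x^3) / 4"

text \<open>G s - G (s (1 - z^2)) = s^2 z^2 energy_quot s z.\<close>
definition energy_quot :: "real \<Rightarrow> real \<Rightarrow> real" where
  "energy_quot s z = s * avg_pow3 (1 - z^2) - s^2 * avg_pow4 (1 - z^2)"

definition energy_quot_dz :: "real \<Rightarrow> real \<Rightarrow> real" where
  "energy_quot_dz s z =
     -2 * z * (s * (1 + 2 * (1 - z^2)) / 3 - s^2 * (1 + 2 * (1 - z^2) + 3 * (1 - z^2)^2) / 4)"

lemma avg_pow3_pos: "0 < avg_pow3 x"
proof -
  have "1 + x + x^2 = (x + 1/2)^2 + 3/4"
    by (simp add: power2_eq_square field_simps)
  also have "\<dots> > 0"
    by (intro add_nonneg_pos) simp_all
  finally show ?thesis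
    unfolding avg_pow3_def by simp
qed

lemma avg_pow4_pos: "0 \<le> x \<Longrightarrow> 0 < avg_pow4 x"
  unfolding avg_pow4_def by (simp add: add_pos_nonneg)

lemma avg_pow3_le_1: "0 \<le> x \<Longrightarrow> x \<le> 1 \<Longrightarrow> avg_pow3 x \<le> 1"
  unfolding avg_pow3_def using power_le_one[of x 2] by simp

lemma avg_pow4_le_1: "0 \<le> x \<Longrightarrow> x \<le> 1 \<Longrightarrow> avg_pow4 x \<le> 1"
  unfolding avg_pow4_def using power_le_one[of x 2] power_le_one[of x 3] by simp

lemma avg_pow3_minus_avg_pow4: "avg_pow3 x - avg_pow4 x = (1 - x) * (3 * x^2 + 2 * x + 1) / 12"
  unfolding avg_pow3_def avg_pow4_def
  by (simp add: field_simps power2_eq_square power3_eq_cube)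

lemma avg_pow4_le_avg_pow3:
  assumes "x \<le> 1"
  shows "avg_pow4 x \<le> avg_pow3 x"
proof -
  have "3 * x^2 + 2 * x + 1 = 3 * (x + 1/3)^2 + 2/3"
    by (simp add: power2_eq_square field_simps)
  also have "\<dots> > 0"
    by (intro add_nonneg_pos) simp_all
  finally have "0 < 3 * x^2 + 2 * x + 1" .
  with assms have "0 \<le> (1 - x) * (3 * x^2 + 2 * x + 1) / 12"
    by simp
  then show ?thesis
    using avg_pow3_minus_avg_pow4[of x] by linarith
qed

lemma energy_quot_eq: "energy_quot s z = s * (avg_pow3 (1 - z^2) - s * avg_pow4 (1 - z^2))"
  unfolding energy_quot_def by (simp add: power2_eq_square algebra_simps)

lemma energy_quot_pos:
  assumes "0 < s" "s < 1"
  shows "0 < energy_quot s z"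
proof -
  define x where "x = 1 - z^2"
  have "s * avg_pow4 x < avg_pow3 x"
  proof (cases "avg_pow4 x \<le> 0")
    case True
    then show ?thesis
      using avg_pow3_pos[of x] assms mult_nonneg_nonpos[of s "avg_pow4 x"] by linarith
  next
    case False
    then have "s * avg_pow4 x < avg_pow4 x"
      using assms by simp
    also have "\<dots> \<le> avg_pow3 x"
      by (rule avg_pow4_le_avg_pow3) (simp add: x_def)
    finally show ?thesis .
  qed
  then show ?thesis
    using assms by (simp add: energy_quot_eq x_def[symmetric])
qed

lemma g_eq_energy_quot: "g (s * (1 - z^2)) = s * (energy_quot s z + z * energy_quot_dz s z / 2)"
  unfolding g_def energy_quot_def energy_quot_dz_def avg_pow3_def avg_pow4_def
  by (simp add: field_simps) algebra

lemma has_real_derivative_energy_quot: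
  "(energy_quot s has_real_derivative energy_quot_dz s z) (at z)"
  unfolding energy_quot_def[abs_def] energy_quot_dz_def avg_pow3_def avg_pow4_def
  by (rule derivative_eq_intros refl | simp)+ (simp add: field_simps; algebra)

lemma continuous_on_energy_quot: "continuous_on S (energy_quot s)"
  unfolding energy_quot_def[abs_def] avg_pow3_def avg_pow4_def
  by (intro continuous_intros) auto

lemma energy_quot_le_self:
  assumes "0 < s" "z \<in> {0..1}"
  shows "energy_quot s z \<le> s"
proof -
  have x: "0 \<le> 1 - z^2" "1 - z^2 \<le> 1"
    using assms(2) by (auto simp: power_le_one)
  have "s * avg_pow3 (1 - z^2) \<le> s"
    using avg_pow3_le_1[OF x] assms(1) by (simp add: mult_left_le)
  moreover have "0 \<le> s^2 * avg_pow4 (1 - z^2)"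
    using avg_pow4_pos[OF x(1)] by simp
  ultimately show ?thesis
    unfolding energy_quot_def by linarith
qed

lemma energy_quot_le_near_1:
  assumes "0 < s" "s < 1" "z \<in> {0..1}"
  shows "energy_quot s z \<le> z^2 / 2 + (1 - s)"
proof -
  define x where "x = 1 - z^2"
  have x: "0 \<le> x" "x \<le> 1"
    using assms(3) by (auto simp: x_def power_le_one)
  have "3 * x^2 + 2 * x + 1 \<le> 6"
    using x power_le_one[of x 2] by linarith
  then have "(1 - x) * (3 * x^2 + 2 * x + 1) \<le> z^2 * 6"
    using mult_left_mono[of _ 6 "z^2"] by (simp add: x_def)
  then have diff: "avg_pow3 x - avg_pow4 x \<le> z^2 / 2"
    unfolding avg_pow3_minus_avg_pow4 by simp
  have rest: "(1 - s) * avg_pow4 x \<le> 1 - s"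
    using avg_pow4_le_1[OF x] assms(2) by (simp add: mult_left_le)
  have pos: "0 < avg_pow3 x - s * avg_pow4 x"
    using energy_quot_pos[OF assms(1,2), of z] assms(1)
    by (simp add: energy_quot_eq x_def zero_less_mult_iff)
  have "energy_quot s z = s * (avg_pow3 x - s * avg_pow4 x)"
    by (simp add: energy_quot_eq x_def)
  also have "\<dots> \<le> avg_pow3 x - s * avg_pow4 x"
    using pos assms(2) by (simp add: mult_le_cancel_right1)
  also have "\<dots> = (avg_pow3 x - avg_pow4 x) + (1 - s) * avg_pow4 x"
    by (simp add: algebra_simps)
  finally show ?thesis
    using diff rest by linarith
qed

lemma energy_quot_convex_combination:
  "energy_quot ((1 - t) * x + t * y) z =
     (1 - t) * energy_quot x z + t * energy_quot y z + t * (1 - t) * (x - y)^2 * avg_pow4 (1 - z^2)"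
  unfolding energy_quot_def by (simp add: power2_eq_square algebra_simps)

subsection \<open>The orbit through (s,0)\<close>

definition time_density :: "real \<Rightarrow> real \<Rightarrow> real" where
  "time_density s z = sqrt 2 / sqrt (energy_quot s z)"

definition scaled_hit_time :: "real \<Rightarrow> real" where
  "scaled_hit_time s = integral {0..1} (time_density s)"

definition speed :: "real \<Rightarrow> real \<Rightarrow> real \<Rightarrow> real" where
  "speed lam s z = sqrt (lam * energy_quot s z / 2)"

text \<open>The time needed to reach z is taken from -1 rather than 0, so that its inverse is
  differentiable on a neighbourhood of [0,1].\<close>
definition z_time :: "real \<Rightarrow> real \<Rightarrow> real \<Rightarrow> real" where
  "z_time lam s z = integral {-1..z} (\<lambda>w. 1 / speed lam s w)"

definition hit_time :: "real \<Rightarrow> real \<Rightarrow> real" where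
  "hit_time lam s = z_time lam s 1 - z_time lam s 0"

definition orbit_z :: "real \<Rightarrow> real \<Rightarrow> real \<Rightarrow> real" where
  "orbit_z lam s t = the_inv_into {-1..2} (z_time lam s) (z_time lam s 0 + 1 - t)"

definition orbit_u :: "real \<Rightarrow> real \<Rightarrow> real \<Rightarrow> real" where
  "orbit_u lam s t = s * (1 - (orbit_z lam s t)^2)"

definition orbit_v :: "real \<Rightarrow> real \<Rightarrow> real \<Rightarrow> real" where
  "orbit_v lam s t = 2 * s * orbit_z lam s t * speed lam s (orbit_z lam s t)"

lemma continuous_on_time_density:
  assumes "0 < s" "s < 1"
  shows "continuous_on S (time_density s)"
  unfolding time_density_def[abs_def] using energy_quot_pos[OF assms]
  by (intro continuous_intros continuous_on_energy_quot) (auto simp: less_imp_neq[symmetric])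

lemma integrable_time_density: "0 < s \<Longrightarrow> s < 1 \<Longrightarrow> time_density s integrable_on {0..1}"
  by (intro integrable_continuous_interval continuous_on_time_density)

context
  fixes lam s :: real
  assumes lam: "0 < lam" and s: "0 < s" "s < 1"
begin

lemma speed_pos: "0 < speed lam s z"
  unfolding speed_def using energy_quot_pos[OF s] lam by simp

lemma speed_squared: "(speed lam s z)^2 = lam * energy_quot s z / 2"
  unfolding speed_def using energy_quot_pos[OF s, of z] lam by simp

lemma has_real_derivative_speed:
  "(speed lam s has_real_derivative lam * energy_quot_dz s z / (4 * speed lam s z)) (at z)"
proof -
  have "((\<lambda>z. lam * energy_quot s z / 2) has_real_derivative lam * energy_quot_dz s z / 2) (at z)"
    using DERIV_cdivide[OF DERIV_cmult[OF has_real_derivative_energy_quot[of s z], of lam], of 2] by simp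
  then have "((\<lambda>z. sqrt (lam * energy_quot s z / 2)) has_real_derivative
          inverse (sqrt (lam * energy_quot s z / 2)) / 2 * (lam * energy_quot_dz s z / 2)) (at z)"
    using energy_quot_pos[OF s, of z] lam by (intro DERIV_chain2[OF DERIV_real_sqrt]) auto
  then show ?thesis
    by (simp add: field_simps speed_def[abs_def])
qed

lemma inverse_speed_eq: "1 / speed lam s z = time_density s z / sqrt lam"
  unfolding speed_def time_density_def using energy_quot_pos[OF s, of z] lam
  by (simp add: real_sqrt_divide real_sqrt_mult field_simps)

lemma continuous_on_inverse_speed: "continuous_on S (\<lambda>z. 1 / speed lam s z)"
  unfolding inverse_speed_eq using lam by (intro continuous_intros continuous_on_time_density s) auto

lemma has_real_derivative_z_time:
  assumes "z \<in> {-1<..<2}"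
  shows "(z_time lam s has_real_derivative 1 / speed lam s z) (at z)"
proof -
  have "(z_time lam s has_real_derivative 1 / speed lam s z) (at z within {-1..2})"
    unfolding z_time_def[abs_def] using assms
    by (intro integral_has_real_derivative continuous_on_inverse_speed) auto
  then show ?thesis
    using assms at_within_Icc_at[of "-1" z 2] by simp
qed

lemma continuous_on_z_time: "continuous_on {-1..2} (z_time lam s)"
  unfolding z_time_def[abs_def]
  by (rule DERIV_continuous_on[where D = "\<lambda>z. 1 / speed lam s z"])
     (intro integral_has_real_derivative continuous_on_inverse_speed)

lemma strict_mono_on_z_time: "strict_mono_on {-1..2} (z_time lam s)"
proof (rule strict_mono_onI)
  fix x y :: real
  assume "x \<in> {-1..2}" "y \<in> {-1..2}" "x < y"
  then show "z_time lam s x < z_time lam s y"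
    using speed_pos
    by (intro DERIV_pos_imp_increasing_open[where f = "z_time lam s"]
        continuous_on_subset[OF continuous_on_z_time])
       (auto intro!: exI has_real_derivative_z_time)
qed

lemma hit_time_pos: "0 < hit_time lam s"
  using strict_mono_on_z_time unfolding hit_time_def strict_mono_on_def by simp

lemma hit_time_eq: "hit_time lam s = scaled_hit_time s / sqrt lam"
proof -
  have "(\<lambda>w. 1 / speed lam s w) integrable_on {-1..1}"
    by (intro integrable_continuous_interval continuous_on_inverse_speed)
  then have "z_time lam s 0 + integral {0..1} (\<lambda>w. 1 / speed lam s w) = z_time lam s 1"
    unfolding z_time_def by (intro Henstock_Kurzweil_Integration.integral_combine) auto
  then show ?thesis
    unfolding hit_time_def inverse_speed_eq scaled_hit_time_def by simp
qed

lemma orbit_z_z_time: "z \<in> {-1..2} \<Longrightarrow> orbit_z lam s (z_time lam s 0 + 1 - z_time lam s z) = z"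
  unfolding orbit_z_def
  by (simp add: the_inv_into_f_f strict_mono_on_imp_inj_on[OF strict_mono_on_z_time])

lemma orbit_z_at_1: "orbit_z lam s 1 = 0"
  using orbit_z_z_time[of 0] by simp

lemma orbit_z_at_hit_time: "orbit_z lam s (1 - hit_time lam s) = 1"
proof -
  have "orbit_z lam s (z_time lam s 0 + 1 - z_time lam s 1) = 1"
    by (rule orbit_z_z_time) simp
  then show ?thesis
    by (simp add: hit_time_def algebra_simps)
qed

lemma orbit_z_mem:
  assumes "t \<in> {1 - hit_time lam s..1}"
  obtains z where "z \<in> {0..1}" "z_time lam s z = z_time lam s 0 + 1 - t" "orbit_z lam s t = z"
proof -
  obtain z where z: "z \<in> {0..1}" "z_time lam s z = z_time lam s 0 + 1 - t"
    using IVT'[of "z_time lam s" 0 "z_time lam s 0 + 1 - t" 1] assms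
      continuous_on_subset[OF continuous_on_z_time]
    by (auto simp: hit_time_def)
  moreover have "orbit_z lam s t = z"
    using orbit_z_z_time[of z] z by simp
  ultimately show ?thesis
    using that by blast
qed

lemma orbit_z_less_1:
  assumes "t \<in> {1 - hit_time lam s<..1}"
  shows "orbit_z lam s t \<in> {0..<1}"
proof -
  have "t \<in> {1 - hit_time lam s..1}"
    using assms by simp
  then obtain z where z: "z \<in> {0..1}" "z_time lam s z = z_time lam s 0 + 1 - t" "orbit_z lam s t = z"
    by (rule orbit_z_mem)
  then have "z_time lam s z < z_time lam s 1"
    using assms by (simp add: hit_time_def)
  then have "z < 1"
    using z(1) strict_mono_on_less[OF strict_mono_on_z_time, of z 1] by simp
  then show ?thesis
    using z by simp
qed

lemma has_real_derivative_orbit_z: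
  assumes "t \<in> {1 - hit_time lam s..1}"
  shows "(orbit_z lam s has_real_derivative - speed lam s (orbit_z lam s t)) (at t)"
proof -
  obtain z where z: "z \<in> {0..1}" "z_time lam s z = z_time lam s 0 + 1 - t" "orbit_z lam s t = z"
    using assms by (rule orbit_z_mem)
  have "(the_inv_into {-1..2} (z_time lam s) has_real_derivative speed lam s z) (at (z_time lam s z))"
    unfolding has_field_derivative_def
  proof (rule has_derivative_inverse_strong[of "{-1<..<2}" z "z_time lam s"])
    show "(z_time lam s has_derivative (*) (1 / speed lam s z)) (at z)"
      using has_real_derivative_z_time[of z] z(1) by (simp add: has_field_derivative_def)
    show "(*) (1 / speed lam s z) \<circ> (*) (speed lam s z) = id"
      using speed_pos[of z] by (auto simp: fun_eq_iff)
    show "\<And>x. x \<in> {-1<..<2} \<Longrightarrow> the_inv_into {-1..2} (z_time lam s) (z_time lam s x) = x"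
      by (simp add: the_inv_into_f_f strict_mono_on_imp_inj_on[OF strict_mono_on_z_time])
    show "continuous_on {-1<..<2} (z_time lam s)"
      by (rule continuous_on_subset[OF continuous_on_z_time]) auto
  qed (use z(1) in auto)
  then have "((\<lambda>t. the_inv_into {-1..2} (z_time lam s) (z_time lam s 0 + 1 - t))
              has_real_derivative speed lam s z * -1) (at t)"
    using z(2) by (intro DERIV_chain2[where f = "the_inv_into {-1..2} (z_time lam s)"]
        derivative_eq_intros) auto
  then show ?thesis
    using z(3) by (simp add: orbit_z_def[abs_def])
qed

lemma has_real_derivative_orbit_u:
  assumes "t \<in> {1 - hit_time lam s..1}"
  shows "(orbit_u lam s has_real_derivative orbit_v lam s t) (at t)"
  unfolding orbit_u_def[abs_def] orbit_v_def
  by (rule derivative_eq_intros has_real_derivative_orbit_z[OF assms] refl | simp)+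

text \<open>The energy identity behind the orbit: speed^2 = lam energy_quot / 2 together with
  g_eq_energy_quot turns the derivative of orbit_v into - lam g (orbit_u).\<close>
lemma has_real_derivative_orbit_v:
  assumes "t \<in> {1 - hit_time lam s..1}"
  shows "(orbit_v lam s has_real_derivative - lam * g (orbit_u lam s t)) (at t)"
proof -
  define z where "z = orbit_z lam s t"
  have dz: "(orbit_z lam s has_real_derivative - speed lam s z) (at t)"
    unfolding z_def by (rule has_real_derivative_orbit_z[OF assms])
  have dspeed: "((\<lambda>t. speed lam s (orbit_z lam s t)) has_real_derivative
      lam * energy_quot_dz s z / (4 * speed lam s z) * - speed lam s z) (at t)"
    unfolding z_def by (rule DERIV_chain2[OF has_real_derivative_speed has_real_derivative_orbit_z[OF assms]])
  have "(orbit_v lam s has_real_derivative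
          2 * s * - speed lam s z * speed lam s z
          + lam * energy_quot_dz s z / (4 * speed lam s z) * - speed lam s z * (2 * s * z)) (at t)"
    unfolding orbit_v_def[abs_def] z_def
    by (rule DERIV_mult[OF DERIV_cmult[OF dz[unfolded z_def]] dspeed[unfolded z_def]])
  moreover have "2 * s * - speed lam s z * speed lam s z
          + lam * energy_quot_dz s z / (4 * speed lam s z) * - speed lam s z * (2 * s * z)
        = - lam * (s * (energy_quot s z + z * energy_quot_dz s z / 2))"
    using speed_pos[of z] speed_squared[of z] by (simp add: field_simps power2_eq_square)
  ultimately show ?thesis
    by (simp add: orbit_u_def g_eq_energy_quot z_def)
qed

lemma orbit_at_1: "orbit_u lam s 1 = s" "orbit_v lam s 1 = 0"
  by (simp_all add: orbit_u_def orbit_v_def orbit_z_at_1)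

lemma orbit_at_hit_time: "orbit_u lam s (1 - hit_time lam s) = 0" "0 < orbit_v lam s (1 - hit_time lam s)"
  by (simp_all add: orbit_u_def orbit_v_def orbit_z_at_hit_time s speed_pos)

lemma orbit_u_pos:
  assumes "t \<in> {1 - hit_time lam s<..1}"
  shows "0 < orbit_u lam s t"
proof -
  have "(orbit_z lam s t)^2 < 1"
    using orbit_z_less_1[OF assms] by (simp add: abs_square_less_1)
  then show ?thesis
    unfolding orbit_u_def using s by simp
qed

end

subsection \<open>The hitting time\<close>

definition is_hit_time :: "real \<Rightarrow> real \<Rightarrow> real \<Rightarrow> bool" where
  "is_hit_time lam s tau \<longleftrightarrow> tau > 0 \<and>
     (\<exists>u v :: real \<Rightarrow> real.
        (\<forall>t\<in>{1-tau..1}. (u has_real_derivative v t) (at t within {1-tau..1}) \<and>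
                          (v has_real_derivative (- lam * g (u t))) (at t within {1-tau..1})) \<and>
        u 1 = s \<and> v 1 = 0 \<and>
        u (1 - tau) = 0 \<and> v (1 - tau) > 0 \<and>
        (\<forall>t\<in>{1-tau<..1}. \<not> (u t = 0 \<and> v t > 0)))"

lemma T0hat_eq_The_is_hit_time: "T0hat lam s = (THE tau. is_hit_time lam s tau)"
  unfolding T0hat_def is_hit_time_def ..

context
  fixes lam s :: real
  assumes lam: "0 < lam" and s: "0 < s" "s < 1"
begin

lemma orbit_solves_ode:
  assumes "{a..1} \<subseteq> {1 - hit_time lam s..1}" "t \<in> {a..1}"
  shows "(orbit_u lam s has_real_derivative orbit_v lam s t) (at t within {a..1}) \<and>
         (orbit_v lam s has_real_derivative - lam * g (orbit_u lam s t)) (at t within {a..1})"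
  using assms has_real_derivative_orbit_u[OF lam s] has_real_derivative_orbit_v[OF lam s]
  by (blast intro: has_field_derivative_at_within)

lemma is_hit_time_hit_time: "is_hit_time lam s (hit_time lam s)"
  unfolding is_hit_time_def
  using hit_time_pos[OF lam s] orbit_solves_ode orbit_at_1[OF lam s] orbit_at_hit_time[OF lam s]
    orbit_u_pos[OF lam s]
  by (intro conjI exI[of _ "orbit_u lam s"] exI[of _ "orbit_v lam s"]) (auto simp: less_imp_neq[symmetric])

lemma backward_solution_eq_orbit:
  assumes sol: "\<forall>t\<in>{1-tau..1}. (u has_real_derivative v t) (at t within {1-tau..1}) \<and>
                           (v has_real_derivative (- lam * g (u t))) (at t within {1-tau..1})"
    and start: "u 1 = s" "v 1 = 0"
    and t: "t \<in> {max (1 - tau) (1 - hit_time lam s)..1}"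
  shows "u t = orbit_u lam s t \<and> v t = orbit_v lam s t"
proof -
  define a where "a = max (1 - tau) (1 - hit_time lam s)"
  show ?thesis
  proof (rule second_order_ode_unique_backward[where F = "\<lambda>x. - lam * g x" and a = a and b = 1
        and u = u and v = v and u' = "orbit_u lam s" and v' = "orbit_v lam s"])
    show "\<exists>L\<ge>0. \<forall>x y. \<bar>x\<bar> \<le> M \<longrightarrow> \<bar>y\<bar> \<le> M \<longrightarrow> \<bar>- lam * g x - - lam * g y\<bar> \<le> L * \<bar>x - y\<bar>" for M
      by (rule scaled_g_locally_lipschitz)
    have sub: "{a..1} \<subseteq> {1 - tau..1}"
      by (simp add: a_def)
    then show "\<forall>t\<in>{a..1}. (u has_real_derivative v t) (at t within {a..1}) \<and>
                      (v has_real_derivative - lam * g (u t)) (at t within {a..1})"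
      using sol DERIV_subset[OF _ sub] by blast
    show "\<forall>t\<in>{a..1}. (orbit_u lam s has_real_derivative orbit_v lam s t) (at t within {a..1}) \<and>
                      (orbit_v lam s has_real_derivative - lam * g (orbit_u lam s t)) (at t within {a..1})"
      using orbit_solves_ode[of a] by (simp add: a_def)
  qed (use t start orbit_at_1[OF lam s] in \<open>auto simp: a_def\<close>)
qed

lemma is_hit_time_unique:
  assumes "is_hit_time lam s tau"
  shows "tau = hit_time lam s"
proof -
  obtain u v where tau: "0 < tau"
    and sol: "\<forall>t\<in>{1-tau..1}. (u has_real_derivative v t) (at t within {1-tau..1}) \<and>
                              (v has_real_derivative (- lam * g (u t))) (at t within {1-tau..1})"
    and start: "u 1 = s" "v 1 = 0" and hit: "u (1 - tau) = 0" "0 < v (1 - tau)"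
    and no_hit: "\<forall>t\<in>{1-tau<..1}. \<not> (u t = 0 \<and> v t > 0)"
    using assms unfolding is_hit_time_def by blast
  let ?T = "hit_time lam s"
  note agree = backward_solution_eq_orbit[OF sol start]
  show ?thesis
  proof (rule ccontr)
    assume "tau \<noteq> ?T"
    then consider "tau < ?T" | "?T < tau"
      by linarith
    then show False
    proof cases
      case 1
      then have "u (1 - tau) = orbit_u lam s (1 - tau)"
        using agree[of "1 - tau"] tau by simp
      moreover have "0 < orbit_u lam s (1 - tau)"
        using 1 tau by (intro orbit_u_pos[OF lam s]) auto
      ultimately show False
        using hit by simp
    next
      case 2
      then have "u (1 - ?T) = 0 \<and> 0 < v (1 - ?T)"
        using agree[of "1 - ?T"] hit_time_pos[OF lam s] orbit_at_hit_time[OF lam s] by simp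
      then show False
        using no_hit 2 hit_time_pos[OF lam s] by auto
    qed
  qed
qed

lemma T0hat_eq: "T0hat lam s = scaled_hit_time s / sqrt lam"
  unfolding T0hat_eq_The_is_hit_time hit_time_eq[OF lam s, symmetric]
  using is_hit_time_hit_time is_hit_time_unique by (rule the_equality)

end

lemma I1_eq_superlevel_set:
  assumes "0 < lam"
  shows "I1 sg lam = {s \<in> {0<..<1}. sg * sqrt lam < scaled_hit_time s}"
  unfolding I1_def using T0hat_eq[OF assms] assms by (auto simp: less_divide_eq)

subsection \<open>Shape of the scaled hitting time\<close>

lemma time_density_strict_convex:
  assumes "0 < x" "x < y" "y < 1" "0 < t" "t < 1" "z \<in> {0..1}"
  shows "time_density ((1 - t) * x + t * y) z < (1 - t) * time_density x z + t * time_density y z"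
proof -
  let ?m = "(1 - t) * x + t * y" and ?Px = "energy_quot x z" and ?Py = "energy_quot y z"
  have Px: "0 < ?Px" and Py: "0 < ?Py"
    using assms by (auto intro: energy_quot_pos)
  then have mix_pos: "0 < (1 - t) * ?Px + t * ?Py"
    using assms by (intro add_pos_pos mult_pos_pos) auto
  have "0 < t * (1 - t) * (x - y)^2 * avg_pow4 (1 - z^2)"
    using assms avg_pow4_pos[of "1 - z^2"] by (simp add: power_le_one)
  then have "(1 - t) * ?Px + t * ?Py < energy_quot ?m z"
    unfolding energy_quot_convex_combination by linarith
  then have "1 / sqrt (energy_quot ?m z) < 1 / sqrt ((1 - t) * ?Px + t * ?Py)"
    using mix_pos by (simp add: divide_strict_left_mono)
  also have "\<dots> \<le> (1 - t) * (1 / sqrt ?Px) + t * (1 / sqrt ?Py)"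
    using convex_onD[OF convex_on_inverse_sqrt, of t ?Px ?Py] assms Px Py by simp
  finally have "sqrt 2 * (1 / sqrt (energy_quot ?m z))
      < sqrt 2 * ((1 - t) * (1 / sqrt ?Px) + t * (1 / sqrt ?Py))"
    by (rule mult_strict_left_mono) simp
  then show ?thesis
    unfolding time_density_def by (simp add: algebra_simps)
qed

lemma strict_convex_on_scaled_hit_time: "strict_convex_on {0<..<1} scaled_hit_time"
  unfolding strict_convex_on_def
proof (intro ballI allI impI)
  fix x y t :: real
  assume "x \<in> {0<..<1}" "y \<in> {0<..<1}" "x < y \<and> 0 < t \<and> t < 1"
  then have assms: "0 < x" "x < y" "y < 1" "0 < t" "t < 1"
    by auto
  have "integral {0..1} (time_density ((1 - t) * x + t * y))
          < integral {0..1} (\<lambda>z. (1 - t) * time_density x z + t * time_density y z)"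
    using assms convex_combination_in_unit_interval[OF assms]
    by (intro integral_less_real continuous_intros continuous_on_time_density time_density_strict_convex)
       auto
  also have "\<dots> = (1 - t) * integral {0..1} (time_density x) + t * integral {0..1} (time_density y)"
    using assms integrable_time_density by (simp add: integral_add)
  finally show "scaled_hit_time ((1 - t) * x + t * y) < (1 - t) * scaled_hit_time x + t * scaled_hit_time y"
    unfolding scaled_hit_time_def .
qed

lemma time_density_ge:
  assumes "0 < s" "s < 1" "energy_quot s z \<le> p"
  shows "sqrt 2 / sqrt p \<le> time_density s z"
  unfolding time_density_def using energy_quot_pos[OF assms(1,2), of z] assms(3)
  by (intro divide_left_mono) auto

lemma scaled_hit_time_ge_near_0:
  assumes "0 < s" "s < 1"
  shows "sqrt 2 / sqrt s \<le> scaled_hit_time s"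
proof -
  have "integral {0..1} (\<lambda>z::real. sqrt 2 / sqrt s) \<le> integral {0..1} (time_density s)"
    using assms energy_quot_le_self
    by (intro integral_le integrable_time_density time_density_ge) auto
  then show ?thesis
    unfolding scaled_hit_time_def by simp
qed

lemma scaled_hit_time_pos: "0 < s \<Longrightarrow> s < 1 \<Longrightarrow> 0 < scaled_hit_time s"
  using scaled_hit_time_ge_near_0[of s] by (auto intro: less_le_trans[of 0 "sqrt 2 / sqrt s"])

lemma scaled_hit_time_ge_near_1:
  assumes "0 < s" "s < 1"
  shows "- ln (2 * (1 - s)) \<le> scaled_hit_time s"
proof -
  define d where "d = sqrt (2 * (1 - s))"
  have "0 < d"
    using assms by (simp add: d_def)
  have log_integral: "((\<lambda>z. 2 / (z + d)) has_integral 2 * ln (1 + d) - 2 * ln (0 + d)) {0..1}"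
  proof (rule fundamental_theorem_of_calculus)
    show "((\<lambda>z. 2 * ln (z + d)) has_vector_derivative 2 / (z + d)) (at z within {0..1})"
      if "z \<in> {0..1}" for z
      using that \<open>0 < d\<close> unfolding has_real_derivative_iff_has_vector_derivative[symmetric]
      by (auto intro!: derivative_eq_intros simp: field_simps)
  qed simp
  have "2 / (z + d) \<le> time_density s z" if z: "z \<in> {0..1}" for z
  proof -
    have "energy_quot s z \<le> z^2 / 2 + (1 - s)"
      using assms z by (rule energy_quot_le_near_1)
    also have "\<dots> \<le> (z + d)^2 / 2"
      using z \<open>0 < d\<close> assms by (simp add: d_def power2_eq_square field_simps)
    finally have "sqrt 2 / sqrt ((z + d)^2 / 2) \<le> time_density s z"
      by (rule time_density_ge[OF assms])
    moreover have "sqrt 2 / sqrt ((z + d)^2 / 2) = 2 / (z + d)"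
      using z \<open>0 < d\<close> by (simp add: real_sqrt_divide field_simps)
    ultimately show ?thesis
      by simp
  qed
  then have "2 * ln (1 + d) - 2 * ln d \<le> scaled_hit_time s"
    unfolding scaled_hit_time_def
    using has_integral_le[OF log_integral integrable_integral[OF integrable_time_density[OF assms]]]
    by simp
  moreover have "0 \<le> ln (1 + d)" and "2 * ln d = ln (2 * (1 - s))"
    using \<open>0 < d\<close> assms by (simp_all add: d_def ln_sqrt)
  ultimately show ?thesis
    by linarith
qed

lemma scaled_hit_time_tendsto_at_0: "filterlim scaled_hit_time at_top (at_right 0)"
proof (rule filterlim_at_top_mono)
  show "filterlim (\<lambda>s::real. sqrt 2 / sqrt s) at_top (at_right 0)"
    by real_asymp
  show "\<forall>\<^sub>F s in at_right 0. sqrt 2 / sqrt s \<le> scaled_hit_time s"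
    unfolding eventually_at_right_field
    by (intro exI[of _ 1]) (auto intro: scaled_hit_time_ge_near_0)
qed

lemma scaled_hit_time_tendsto_at_1: "filterlim scaled_hit_time at_top (at_left 1)"
proof (rule filterlim_at_top_mono)
  show "filterlim (\<lambda>s::real. - ln (2 * (1 - s))) at_top (at_left 1)"
    by real_asymp
  show "\<forall>\<^sub>F s in at_left 1. - ln (2 * (1 - s)) \<le> scaled_hit_time s"
    unfolding eventually_at_left_field
    by (intro exI[of _ 0]) (use scaled_hit_time_ge_near_1 in auto)
qed

theorem proposition2p3:
  fixes sg :: real
  assumes "0 < sg" and "sg < 1/2"
  shows "\<exists>lamstar > 0. \<exists>sstar. 0 < sstar \<and> sstar < 1 \<and>
           (\<forall>lam. 0 < lam \<and> lam < lamstar \<longrightarrow> I1 sg lam = {0<..<1}) \<and>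
           I1 sg lamstar = {0<..<1} - {sstar} \<and>
           (\<forall>lam > lamstar. \<exists>s0 s1. 0 < s0 \<and> s0 < sstar \<and> sstar < s1 \<and> s1 < 1 \<and>
              I1 sg lam = {0<..<s0} \<union> {s1<..<1})"
proof -
  let ?tau = scaled_hit_time
  obtain m where m: "m \<in> {0<..<1}"
    and below: "\<And>c. c < ?tau m \<Longrightarrow> {s \<in> {0<..<1}. c < ?tau s} = {0<..<1}"
    and critical: "{s \<in> {0<..<1}. ?tau m < ?tau s} = {0<..<1} - {m}"
    and above: "\<And>c. ?tau m < c \<Longrightarrow> \<exists>s0 s1. 0 < s0 \<and> s0 < m \<and> m < s1 \<and> s1 < 1 \<and>
                                  {s \<in> {0<..<1}. c < ?tau s} = {0<..<s0} \<union> {s1<..<1}"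
    using strict_convex_on_scaled_hit_time scaled_hit_time_tendsto_at_0 scaled_hit_time_tendsto_at_1
    by (rule strictly_convex_coercive_superlevel_sets) blast
  define lamstar where "lamstar = (?tau m / sg)^2"
  have "0 < lamstar" and tau_m: "?tau m = sg * sqrt lamstar"
    using assms(1) scaled_hit_time_pos[of m] m by (simp_all add: lamstar_def)
  have "I1 sg lam = {0<..<1}" if "0 < lam" "lam < lamstar" for lam
    using that assms(1) tau_m below[of "sg * sqrt lam"] by (simp add: I1_eq_superlevel_set)
  moreover have "I1 sg lamstar = {0<..<1} - {m}"
    using \<open>0 < lamstar\<close> critical by (simp add: I1_eq_superlevel_set tau_m)
  moreover have "\<exists>s0 s1. 0 < s0 \<and> s0 < m \<and> m < s1 \<and> s1 < 1 \<and> I1 sg lam = {0<..<s0} \<union> {s1<..<1}"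
    if "lamstar < lam" for lam
    using that \<open>0 < lamstar\<close> assms(1) tau_m above[of "sg * sqrt lam"]
    by (simp add: I1_eq_superlevel_set)
  ultimately show ?thesis
    using \<open>0 < lamstar\<close> m by auto
qed

end
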